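(* Under the hypotheses of the growth condition (convex, symmetric, sign-invariant $f$, $g(w,x)=f_\sigma(wx^\top-\bar w\bar x^\top)$, and $\kappa>0$ with $g(w,x)-g(\bar w,\bar x)\ge\kappa\|wx^\top-\bar w\bar x^\top\|_F$ for all $(w,x)$), let $(w,x)\in\mathbb{R}^{d_1}\times\mathbb{R}^{d_2}$ and let $Y\in\partial f_\sigma(wx^\top-\bar w\bar x^\top)$ attain $\mathrm{dist}(0,\partial g(w,x))=\|(Yx,Y^\top w)\|$. Then $$\kappa\|wx^\top-\bar w\bar x^\top\|-(\sigma_1(Y)+\sigma_2(Y))\|\bar w\bar x^\top\|\le\min\{\|w\|,\|x\|\}\,\mathrm{dist}(0,\partial g(w,x)).$$
   Context: Let $d=\min\{d_1,d_2\}$ and $\sigma:\mathbb{R}^{d_1\times d_2}\to\mathbb{R}^d_+$ give singular values in nonincreasing order. $f:\mathbb{R}^d\to\mathbb{R}$ is symmetric if $f(\pi s)=f(s)$ for all permutation matrices $\pi$, sign invariant if $f(Ds)=f(s)$ for all diagonal $D$ with entries in $\{\pm1\}$; $f_\sigma=f\circ\sigma$ is convex when $f$ is and $\partial f_\sigma$ is its convex subdifferential; $\partial g(w,x)=\{(Yx,Y^\top w):Y\in\partial f_\sigma(wx^\top-\bar w\bar x^\top)\}$. $\|M\|$ is the operator norm, $\|M\|_F$ the Frobenius norm. *)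

theory Defs
  imports "HOL-Analysis.Analysis" "HOL-Library.Multiset"
begin

text \<open>Matrices in R^{d1 x d2} are rendered as real^'d2^'d1; the library norm on this
type is the Frobenius norm and the library inner product is the Frobenius inner product.
Vectors in R^d (d = min d1 d2) are rendered as real lists of length d.\<close>

definition outer :: "real^'m \<Rightarrow> real^'n \<Rightarrow> real^'n^'m" where
  "outer w x = (\<chi> i j. w $ i * x $ j)"

definition op_norm :: "real^'n^'m \<Rightarrow> real" where
  "op_norm M = onorm (\<lambda>v. M *v v)"

text \<open>Eigenvalues (with multiplicity = dimension of eigenspace) of a square matrix;
used only for the symmetric matrix M^T M.\<close>
definition eig_mset :: "real^'n^'n \<Rightarrow> real multiset" where
  "eig_mset A = (\<Sum>t \<in> {t. \<exists>v. v \<noteq> 0 \<and> A *v v = t *s v}.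
                    replicate_mset (dim {v. A *v v = t *s v}) t)"

definition sing_vals :: "real^'n^'m \<Rightarrow> real list" where
  "sing_vals M = take (min CARD('m) CARD('n))
      (map sqrt (rev (sorted_list_of_multiset (eig_mset (transpose M ** M)))))"

text \<open>k-th singular value (0-based), with the convention 0 for k >= d.\<close>
definition sv :: "real^'n^'m \<Rightarrow> nat \<Rightarrow> real" where
  "sv M k = (if k < length (sing_vals M) then sing_vals M ! k else 0)"

definition convex_Rd :: "nat \<Rightarrow> (real list \<Rightarrow> real) \<Rightarrow> bool" where
  "convex_Rd d f \<longleftrightarrow> (\<forall>s t u. length s = d \<and> length t = d \<and> 0 \<le> u \<and> u \<le> 1 \<longrightarrow>
      f (map2 (\<lambda>a b. u * a + (1 - u) * b) s t) \<le> u * f s + (1 - u) * f t)"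

definition symmetric_Rd :: "nat \<Rightarrow> (real list \<Rightarrow> real) \<Rightarrow> bool" where
  "symmetric_Rd d f \<longleftrightarrow> (\<forall>s p. length s = d \<and> p permutes {..<d} \<longrightarrow>
      f (map (\<lambda>i. s ! p i) [0..<d]) = f s)"

definition sign_invariant_Rd :: "nat \<Rightarrow> (real list \<Rightarrow> real) \<Rightarrow> bool" where
  "sign_invariant_Rd d f \<longleftrightarrow> (\<forall>s e. length s = d \<and> length e = d \<and> set e \<subseteq> {-1, 1} \<longrightarrow>
      f (map2 (*) e s) = f s)"

definition f_sigma :: "(real list \<Rightarrow> real) \<Rightarrow> real^'n^'m \<Rightarrow> real" where
  "f_sigma f M = f (sing_vals M)"

definition subdiff :: "('a::real_inner \<Rightarrow> real) \<Rightarrow> 'a \<Rightarrow> 'a set" where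
  "subdiff h M = {Y. \<forall>Z. h Z \<ge> h M + inner Y (Z - M)}"

definition gfun :: "(real list \<Rightarrow> real) \<Rightarrow> real^'m \<Rightarrow> real^'n \<Rightarrow> real^'m \<Rightarrow> real^'n \<Rightarrow> real" where
  "gfun f wb xb w x = f_sigma f (outer w x - outer wb xb)"

definition subdiff_g :: "(real list \<Rightarrow> real) \<Rightarrow> real^'m \<Rightarrow> real^'n \<Rightarrow> real^'m \<Rightarrow> real^'n
     \<Rightarrow> ((real^'m) \<times> (real^'n)) set" where
  "subdiff_g f wb xb w x =
     {(Y *v x, transpose Y *v w) | Y. Y \<in> subdiff (f_sigma f) (outer w x - outer wb xb)}"

end

theory Submission
  imports Defs
begin

text \<open>With \<open>M = w x\<^sup>T - w\<^sub>0 x\<^sub>0\<^sup>T\<close>, the growth condition and the subgradient inequality at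
  \<open>Z = 0\<close> give \<open>\<kappa>\<parallel>M\<parallel> \<le> f\<^sub>\<sigma>(M) - f\<^sub>\<sigma>(0) \<le> \<langle>Y, M\<rangle> = \<langle>w, Yx\<rangle> - \<langle>w\<^sub>0, Yx\<^sub>0\<rangle>\<close>. The first term is at
  most \<open>min(\<parallel>w\<parallel>, \<parallel>x\<parallel>)\<close> times \<open>\<parallel>(Yx, Y\<^sup>Tw)\<parallel>\<close> by Cauchy-Schwarz, applied either to \<open>Yx\<close> or to
  \<open>Y\<^sup>Tw\<close>; the second is at most \<open>\<sigma>\<^sub>1(Y)\<parallel>w\<^sub>0\<parallel>\<parallel>x\<^sub>0\<parallel> \<le> \<sigma>\<^sub>1(Y)\<parallel>w\<^sub>0x\<^sub>0\<^sup>T\<parallel>\<close> in absolute value.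
  The bound \<open>\<parallel>Yz\<parallel> \<le> \<sigma>\<^sub>1(Y)\<parallel>z\<parallel>\<close> comes from the maximiser of \<open>\<parallel>Yz\<parallel>\<close> on the unit sphere,
  which is an eigenvector of \<open>Y\<^sup>TY\<close>.\<close>

lemma norm_matrix_vector_le_norm_mult:
  fixes A :: "real^'n^'m"
  shows "norm (A *v v) \<le> norm A * norm v"
proof -
  have "norm (A *v v)^2 = (\<Sum>i\<in>UNIV. (inner (A$i) v)^2)"
    by (simp add: norm_vec_def L2_set_def sum_nonneg matrix_vector_mul_component)
  also have "\<dots> \<le> (\<Sum>i\<in>UNIV. norm (A$i)^2 * norm v^2)"
  proof (rule sum_mono)
    fix i
    have "\<bar>inner (A$i) v\<bar>^2 \<le> (norm (A$i) * norm v)^2"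
      by (rule power_mono[OF Cauchy_Schwarz_ineq2]) simp
    then show "(inner (A$i) v)^2 \<le> norm (A$i)^2 * norm v^2"
      by (simp add: power_mult_distrib power2_abs)
  qed
  also have "\<dots> = (norm A * norm v)^2"
    by (simp add: power2_norm_eq_inner inner_vec_def sum_distrib_right power_mult_distrib)
  finally show ?thesis by (rule power2_le_imp_le) simp
qed

lemma op_norm_nonneg: "0 \<le> op_norm (M :: real^'n^'m)"
  unfolding op_norm_def by (rule onorm_pos_le) simp

lemma op_norm_le_norm: "op_norm (M :: real^'n^'m) \<le> norm M"
  unfolding op_norm_def by (rule onorm_le) (rule norm_matrix_vector_le_norm_mult)

lemma norm_mult_le_op_norm_outer: "norm a * norm b \<le> op_norm (outer a b :: real^'n^'m)"
proof (cases "b = 0")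
  case True
  then show ?thesis using op_norm_nonneg by simp
next
  case False
  have "outer a b *v b = (norm b)\<^sup>2 *\<^sub>R a"
    by (simp add: outer_def matrix_vector_mult_def power2_norm_eq_inner inner_vec_def vec_eq_iff
        sum_distrib_left mult_ac)
  then have "norm a * norm b * norm b = norm (outer a b *v b)"
    by (simp add: power2_eq_square)
  also have "\<dots> \<le> op_norm (outer a b) * norm b"
    unfolding op_norm_def by (rule onorm) simp
  finally show ?thesis using False by simp
qed

lemma inner_outer_right:
  fixes Y :: "real^'n^'m"
  shows "inner Y (outer a b) = inner a (Y *v b)"
  by (simp add: inner_vec_def outer_def matrix_vector_mult_def sum_distrib_left mult_ac)

lemma inner_transpose_mult_vector:
  fixes Y :: "real^'n^'m"
  shows "inner ((transpose Y ** Y) *v u) v = inner (Y *v u) (Y *v v)"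
  by (simp add: matrix_vector_mul_assoc[symmetric] dot_lmul_matrix)

lemma inner_matrix_vector_transpose:
  fixes Y :: "real^'n^'m"
  shows "inner w (Y *v x) = inner (transpose Y *v w) x"
  by (metis dot_lmul_matrix transpose_transpose vector_transpose_matrix)

lemma orthogonal_eigenvectors_transpose_mult:
  fixes Y :: "real^'n^'m"
  assumes "(transpose Y ** Y) *v u = s *s u" "(transpose Y ** Y) *v v = t *s v" "s \<noteq> t"
  shows "orthogonal u v"
proof -
  have "s * inner u v = inner (Y *v u) (Y *v v)"
    using inner_transpose_mult_vector[of Y u v] assms(1) by (simp add: scalar_mult_eq_scaleR)
  also have "\<dots> = t * inner u v"
    using inner_transpose_mult_vector[of Y v u] assms(2)
    by (simp add: scalar_mult_eq_scaleR inner_commute)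
  finally show ?thesis using assms(3) by (simp add: orthogonal_def)
qed

lemma finite_eigenvalues_transpose_mult:
  fixes Y :: "real^'n^'m"
  shows "finite {t. \<exists>v. v \<noteq> 0 \<and> (transpose Y ** Y) *v v = t *s v}"
proof -
  define E where "E = {t. \<exists>v. v \<noteq> 0 \<and> (transpose Y ** Y) *v v = t *s v}"
  define ev where "ev t = (SOME v. v \<noteq> 0 \<and> (transpose Y ** Y) *v v = t *s v)" for t
  have ev: "ev t \<noteq> 0 \<and> (transpose Y ** Y) *v ev t = t *s ev t" if "t \<in> E" for t
  proof -
    from that obtain v where "v \<noteq> 0 \<and> (transpose Y ** Y) *v v = t *s v"
      unfolding E_def by blast
    then show ?thesis unfolding ev_def by (rule someI)
  qed
  have inj: "inj_on ev E"
  proof (rule inj_onI)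
    fix s t assume "s \<in> E" "t \<in> E" "ev s = ev t"
    then have "s *s ev s = t *s ev s" using ev by metis
    then show "s = t" using ev[OF \<open>s \<in> E\<close>]
      by (metis scalar_mult_eq_scaleR scaleR_cancel_right)
  qed
  have "pairwise orthogonal (ev ` E)"
  proof (clarsimp simp: pairwise_def)
    fix s t assume "s \<in> E" "t \<in> E" "ev s \<noteq> ev t"
    then have "s \<noteq> t" by auto
    then show "orthogonal (ev s) (ev t)"
      using ev[OF \<open>s \<in> E\<close>] ev[OF \<open>t \<in> E\<close>] orthogonal_eigenvectors_transpose_mult
      by blast
  qed
  moreover have "0 \<notin> ev ` E" using ev by fastforce
  ultimately have "independent (ev ` E)" using pairwise_orthogonal_independent by blast
  then have "finite (ev ` E)" using independent_bound by blast
  then show ?thesis using inj finite_imageD unfolding E_def by blast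
qed

lemma set_mset_eig_mset_transpose_mult:
  fixes Y :: "real^'n^'m"
  shows "set_mset (eig_mset (transpose Y ** Y))
           = {t. \<exists>v. v \<noteq> 0 \<and> (transpose Y ** Y) *v v = t *s v}"
proof -
  have "dim {v. (transpose Y ** Y) *v v = t *s v} \<noteq> 0"
    if "v \<noteq> 0" "(transpose Y ** Y) *v v = t *s v" for t v
    using that by (auto simp: dim_eq_0)
  then show ?thesis
    unfolding eig_mset_def set_mset_sum[OF finite_eigenvalues_transpose_mult]
    by (auto simp del: dim_eq_0)
qed

lemma eig_mset_transpose_mult_nonneg:
  fixes Y :: "real^'n^'m"
  assumes "t \<in># eig_mset (transpose Y ** Y)"
  shows "0 \<le> t"
proof -
  obtain v where v: "v \<noteq> 0" "(transpose Y ** Y) *v v = t *s v"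
    using assms unfolding set_mset_eig_mset_transpose_mult by blast
  have "t * inner v v = inner (Y *v v) (Y *v v)"
    using inner_transpose_mult_vector[of Y v v] v(2) by (simp add: scalar_mult_eq_scaleR)
  then have "0 \<le> t * inner v v" by simp
  moreover have "0 < inner v v" using v(1) by simp
  ultimately show ?thesis by (simp add: zero_le_mult_iff)
qed

lemma nonneg_quadratic_imp_linear_coeff_zero:
  fixes a b :: real
  assumes "0 \<le> a" "0 \<le> b" "\<And>t. 0 \<le> 2 * t * a + t^2 * b"
  shows "a = 0"
proof -
  \<comment> \<open>at \<open>t = -a/(b+1)\<close> the quadratic equals \<open>-a\<^sup>2(b+2)/(b+1)\<^sup>2\<close>\<close>
  define t where "t = - a / (b + 1)"
  have t: "t * (b + 1) = - a" unfolding t_def using assms(2) by simp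
  have "(b+1)^2 * (2*t*a + t^2*b) = 2*(t*(b+1))*a*(b+1) + (t*(b+1))^2*b"
    by (simp add: algebra_simps power2_eq_square)
  also have "\<dots> = - (a^2 * (b + 2))" unfolding t by (simp add: algebra_simps power2_eq_square)
  finally have "(b+1)^2 * (2*t*a + t^2*b) = - (a^2 * (b + 2))" .
  moreover have "0 \<le> (b+1)^2 * (2*t*a + t^2*b)" using assms(3)[of t] by simp
  ultimately have "a^2 * (b + 2) \<le> 0" by simp
  then have "a^2 \<le> 0" using assms(2) by (simp add: mult_le_0_iff)
  then show ?thesis by simp
qed

lemma rayleigh_maximiser_is_eigenvector:
  fixes Y :: "real^'n^'m"
  assumes bound: "\<And>z. norm (Y *v z)^2 \<le> lam * norm z^2"
    and attained: "norm (Y *v v)^2 = lam * norm v^2"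
  shows "(transpose Y ** Y) *v v = lam *s v"
proof -
  define q where "q z = lam * inner z z - inner (Y *v z) (Y *v z)" for z
  have q_nonneg: "0 \<le> q z" for z
    using bound[of z] unfolding q_def by (simp add: power2_norm_eq_inner)
  define u where "u = lam *\<^sub>R v - (transpose Y ** Y) *v v"
  \<comment> \<open>\<open>q\<close> is minimal at \<open>v\<close>, so its derivative \<open>2\<langle>u, \<cdot>\<rangle>\<close> there vanishes\<close>
  have "q v = 0" using attained unfolding q_def by (simp add: power2_norm_eq_inner)
  moreover have "inner (Y *v v) (Y *v u) = lam * inner v u - inner u u"
    unfolding inner_transpose_mult_vector[symmetric] u_def by (simp add: inner_diff_left)
  moreover have "q (v + t *\<^sub>R u)
      = q v + 2 * t * (lam * inner v u - inner (Y *v v) (Y *v u)) + t^2 * q u" for t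
    unfolding q_def
    by (simp add: matrix_vector_right_distrib matrix_vector_mult_scaleR inner_add_left
        inner_add_right inner_commute algebra_simps power2_eq_square)
  ultimately have expand: "q (v + t *\<^sub>R u) = 2 * t * inner u u + t^2 * q u" for t
    by simp
  have "inner u u = 0"
  proof (rule nonneg_quadratic_imp_linear_coeff_zero)
    show "0 \<le> inner u u" "0 \<le> q u" by (simp_all add: q_nonneg)
    show "0 \<le> 2 * t * inner u u + t^2 * q u" for t using q_nonneg expand by metis
  qed
  then show ?thesis unfolding u_def by (simp add: scalar_mult_eq_scaleR)
qed

lemma obtain_top_eigenvalue_transpose_mult:
  fixes Y :: "real^'n^'m"
  obtains lam where "lam \<in># eig_mset (transpose Y ** Y)"
    and "\<And>z. norm (Y *v z)^2 \<le> lam * norm z^2"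
proof -
  have sphere: "compact (sphere (0::real^'n) 1)" "sphere (0::real^'n) 1 \<noteq> {}" by simp_all
  have "continuous_on (sphere 0 1) ((*v) Y)" by (rule linear_continuous_on) simp
  then have "continuous_on (sphere 0 1) (\<lambda>z. norm (Y *v z)^2)"
    by (intro continuous_on_power continuous_on_norm)
  then obtain v where v: "v \<in> sphere 0 1"
    and max: "\<And>y. y \<in> sphere 0 1 \<Longrightarrow> norm (Y *v y)^2 \<le> norm (Y *v v)^2"
    using continuous_attains_sup[OF sphere] by blast
  define lam where "lam = norm (Y *v v)^2"
  have bound: "norm (Y *v z)^2 \<le> lam * norm z^2" for z
  proof (cases "z = 0")
    case False
    define u where "u = (1 / norm z) *\<^sub>R z"
    have "u \<in> sphere 0 1" unfolding u_def using False by simp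
    then have "norm (Y *v u)^2 \<le> lam" using max unfolding lam_def by blast
    moreover have "norm (Y *v u)^2 = norm (Y *v z)^2 / norm z^2"
      unfolding u_def matrix_vector_mult_scaleR by (simp add: power_divide)
    ultimately show ?thesis using False by (simp add: divide_le_eq)
  qed simp
  have "norm v = 1" using v by simp
  then have "(transpose Y ** Y) *v v = lam *s v"
    by (intro rayleigh_maximiser_is_eigenvector[OF bound]) (simp add: lam_def)
  moreover have "v \<noteq> 0" using \<open>norm v = 1\<close> by auto
  ultimately have "lam \<in># eig_mset (transpose Y ** Y)"
    unfolding set_mset_eig_mset_transpose_mult by blast
  then show ?thesis using that bound by blast
qed

lemma sv_nonneg: "0 \<le> sv (Y :: real^'n^'m) k"
proof (cases "k < length (sing_vals Y)")
  case True
  define xs where "xs = rev (sorted_list_of_multiset (eig_mset (transpose Y ** Y)))"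
  have sing_vals: "sing_vals Y = take (min CARD('m) CARD('n)) (map sqrt xs)"
    unfolding sing_vals_def xs_def ..
  have "k < length xs" using True unfolding sing_vals by simp
  then have "xs ! k \<in> set xs" by (rule nth_mem)
  then have "xs ! k \<in># eig_mset (transpose Y ** Y)" unfolding xs_def by simp
  then have "0 \<le> sqrt (xs ! k)" using eig_mset_transpose_mult_nonneg by simp
  then show ?thesis using True unfolding sv_def sing_vals by simp
qed (simp add: sv_def)

lemma sorted_le_last: "sorted xs \<Longrightarrow> x \<in> set xs \<Longrightarrow> x \<le> last xs"
  by (induction xs) (auto simp: last_ConsR)

lemma sqrt_eigenvalue_le_sv0:
  fixes Y :: "real^'n^'m"
  assumes "lam \<in># eig_mset (transpose Y ** Y)"
  shows "sqrt lam \<le> sv Y 0"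
proof -
  define xs where "xs = sorted_list_of_multiset (eig_mset (transpose Y ** Y))"
  have "lam \<in> set xs" "sorted xs" using assms unfolding xs_def by simp_all
  then have "xs \<noteq> []" by auto
  have sing_vals: "sing_vals Y = take (min CARD('m) CARD('n)) (map sqrt (rev xs))"
    unfolding sing_vals_def xs_def ..
  have "0 < min CARD('m) CARD('n)" by simp
  then have "sv Y 0 = sqrt (last xs)"
    using \<open>xs \<noteq> []\<close> unfolding sv_def sing_vals by (simp add: hd_rev[symmetric] hd_conv_nth)
  moreover have "lam \<le> last xs" using \<open>sorted xs\<close> \<open>lam \<in> set xs\<close> by (rule sorted_le_last)
  ultimately show ?thesis by simp
qed

lemma norm_matrix_vector_le_sv0:
  fixes Y :: "real^'n^'m"
  shows "norm (Y *v z) \<le> sv Y 0 * norm z"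
proof -
  obtain lam where lam: "lam \<in># eig_mset (transpose Y ** Y)"
    and bound: "norm (Y *v z)^2 \<le> lam * norm z^2"
    using obtain_top_eigenvalue_transpose_mult by blast
  then have "norm (Y *v z) \<le> sqrt lam * norm z"
    using real_sqrt_le_mono[OF bound] by (simp add: real_sqrt_mult)
  also have "\<dots> \<le> sv Y 0 * norm z"
    by (rule mult_right_mono[OF sqrt_eigenvalue_le_sv0[OF lam] norm_ge_zero])
  finally show ?thesis .
qed

lemma inner_matrix_vector_le_min_norm:
  fixes Y :: "real^'n^'m"
  shows "inner w (Y *v x) \<le> min (norm w) (norm x) * norm (Y *v x, transpose Y *v w)"
proof -
  have "inner w (Y *v x) \<le> norm w * norm (Y *v x)" by (rule norm_cauchy_schwarz)
  also have "\<dots> \<le> norm w * norm (Y *v x, transpose Y *v w)"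
    by (rule mult_left_mono) (simp_all add: norm_fst_le)
  finally have by_w: "inner w (Y *v x) \<le> norm w * norm (Y *v x, transpose Y *v w)" .
  have "inner w (Y *v x) = inner (transpose Y *v w) x"
    by (rule inner_matrix_vector_transpose)
  also have "\<dots> \<le> norm (transpose Y *v w) * norm x" by (rule norm_cauchy_schwarz)
  also have "\<dots> \<le> norm (Y *v x, transpose Y *v w) * norm x"
    by (rule mult_right_mono) (simp_all add: norm_snd_le)
  finally have by_x: "inner w (Y *v x) \<le> norm x * norm (Y *v x, transpose Y *v w)"
    by (simp add: mult.commute)
  from by_w by_x show ?thesis by (simp add: min_def)
qed

lemma abs_inner_matrix_vector_le_sv0_op_norm:
  fixes Y :: "real^'n^'m"
  shows "\<bar>inner a (Y *v b)\<bar> \<le> sv Y 0 * op_norm (outer a b)"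
proof -
  have "\<bar>inner a (Y *v b)\<bar> \<le> norm a * norm (Y *v b)" by (rule Cauchy_Schwarz_ineq2)
  also have "\<dots> \<le> norm a * (sv Y 0 * norm b)"
    by (rule mult_left_mono[OF norm_matrix_vector_le_sv0 norm_ge_zero])
  also have "\<dots> = sv Y 0 * (norm a * norm b)" by simp
  also have "\<dots> \<le> sv Y 0 * op_norm (outer a b)"
    by (rule mult_left_mono[OF norm_mult_le_op_norm_outer sv_nonneg])
  finally show ?thesis .
qed

theorem lemmaC2:
  fixes f :: "real list \<Rightarrow> real"
    and wb w :: "real^'d1" and xb x :: "real^'d2"
    and \<kappa> :: real and Y :: "real^'d2^'d1"
  assumes "convex_Rd (min CARD('d1) CARD('d2)) f"
    and "symmetric_Rd (min CARD('d1) CARD('d2)) f"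
    and "sign_invariant_Rd (min CARD('d1) CARD('d2)) f"
    and "\<kappa> > 0"
    and "\<forall>w' x'. gfun f wb xb w' x' - gfun f wb xb wb xb \<ge> \<kappa> * norm (outer w' x' - outer wb xb)"
    and "Y \<in> subdiff (f_sigma f) (outer w x - outer wb xb)"
    and "norm (Y *v x, transpose Y *v w) = infdist 0 (subdiff_g f wb xb w x)"
  shows "\<kappa> * op_norm (outer w x - outer wb xb) - (sv Y 0 + sv Y 1) * op_norm (outer wb xb)
           \<le> min (norm w) (norm x) * infdist 0 (subdiff_g f wb xb w x)"
proof -
  define M where "M = outer w x - outer wb xb"
  define D where "D = infdist 0 (subdiff_g f wb xb w x)"
  have D: "D = norm (Y *v x, transpose Y *v w)" using assms(7) unfolding D_def by simp
  have "\<kappa> * op_norm M \<le> \<kappa> * norm M"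
    using assms(4) op_norm_le_norm[of M] by simp
  also have "\<dots> \<le> f_sigma f M - f_sigma f (0::real^'d2^'d1)"
    using assms(5) unfolding gfun_def M_def by simp
  also have "\<dots> \<le> inner Y M"
  proof -
    have "f_sigma f M + inner Y (0 - M) \<le> f_sigma f (0::real^'d2^'d1)"
      using assms(6) unfolding subdiff_def mem_Collect_eq M_def by (rule spec)
    then show ?thesis by simp
  qed
  also have "\<dots> = inner w (Y *v x) - inner wb (Y *v xb)"
    unfolding M_def by (simp add: inner_diff_right inner_outer_right)
  finally have growth: "\<kappa> * op_norm M \<le> inner w (Y *v x) - inner wb (Y *v xb)" .
  have "inner w (Y *v x) \<le> min (norm w) (norm x) * D"
    unfolding D by (rule inner_matrix_vector_le_min_norm)
  moreover have "- inner wb (Y *v xb) \<le> (sv Y 0 + sv Y 1) * op_norm (outer wb xb)"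
    using abs_inner_matrix_vector_le_sv0_op_norm[of wb Y xb]
      mult_left_mono[OF op_norm_nonneg sv_nonneg[of Y 1], of "outer wb xb"]
    by (simp add: distrib_right abs_le_iff)
  ultimately show ?thesis
    using growth unfolding M_def D_def by linarith
qed

end
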